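(* Let $a,b\in\mathbb{N}$ with $a,b>1$, $c\in\mathbb{R}$ with $c>0$, and $h:\mathbb{N}\to(0,\infty]$ with $0<h(n)<\infty$ for all $n\in\mathbb{N}$. Consider the recurrence $$T(1)=c,\qquad T(n)=aT(n/b)+h(n)\ \text{ for } n\in\omega_b.$$ Then this recurrence has a unique solution $f_T\in\mathcal{RT}_{b,c}$. Moreover, if there exists $g\in\mathcal{RT}_{b,c}$ such that $\Phi_T$ is an improver with respect to $g$, then $f_T\in\mathcal{O}(g)$.
   Context: $\mathbb{N}$ is the set of positive integers, $\omega$ the nonnegative integers, $\omega_b=\{b^k:k\in\mathbb{N}\}$. $\mathcal{RT}$ is the set of all functions $\mathbb{N}\to(0,\infty]$, and $\mathcal{RT}_{b,c}=\{f\in\mathcal{RT}: f(1)=c \text{ and } f(n)=\infty \text{ for all } n\notin\omega_b \text{ with } n>1\}$. $\Phi_T:\mathcal{RT}_{b,c}\to\mathcal{RT}_{b,c}$ is defined by $\Phi_T(f)(1)=c$, $\Phi_T(f)(n)=\infty$ if $n\notin\omega_b$ and $n>1$, and $\Phi_T(f)(n)=af(n/b)+h(n)$ otherwise. A functional $\Phi:C\to C$ ($C\subseteq\mathcal{RT}$) is an improver with respect to $f\in C$ if $\Phi^{n+1}(f)\le\Phi^n(f)$ pointwise for all $n\in\omega$ (with $\Phi^0(f)=f$). For $f,g\in\mathcal{RT}$, $f\in\mathcal{O}(g)$ means there exist $n_0\in\mathbb{N}$ and $C\ge0$ with $f(n)\le Cg(n)$ for all $n\ge n_0$. *)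

theory Defs
  imports "HOL-Analysis.Analysis"
begin

text \<open>Functions N -> (0,\<infinity>] are modelled as nat \<Rightarrow> ereal; only arguments n \<ge> 1 matter.\<close>

definition omega_b :: "nat \<Rightarrow> nat set" where
  "omega_b b = {b ^ k | k. k \<ge> 1}"

definition RT :: "(nat \<Rightarrow> ereal) set" where
  "RT = {f. \<forall>n\<ge>1. 0 < f n}"

definition RT_bc :: "nat \<Rightarrow> real \<Rightarrow> (nat \<Rightarrow> ereal) set" where
  "RT_bc b c = {f \<in> RT. f 1 = ereal c \<and> (\<forall>n. n > 1 \<and> n \<notin> omega_b b \<longrightarrow> f n = \<infinity>)}"

definition PhiT :: "nat \<Rightarrow> nat \<Rightarrow> real \<Rightarrow> (nat \<Rightarrow> real) \<Rightarrow> (nat \<Rightarrow> ereal) \<Rightarrow> (nat \<Rightarrow> ereal)" where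
  "PhiT a b c h f = (\<lambda>n. if n = 1 then ereal c
                          else if n \<notin> omega_b b then \<infinity>
                          else ereal (real a) * f (n div b) + ereal (h n))"

definition improver :: "(nat \<Rightarrow> ereal) set \<Rightarrow> ((nat \<Rightarrow> ereal) \<Rightarrow> (nat \<Rightarrow> ereal)) \<Rightarrow> (nat \<Rightarrow> ereal) \<Rightarrow> bool" where
  "improver C Phi f \<longleftrightarrow> f \<in> C \<and> (\<forall>k. \<forall>n\<ge>1. (Phi ^^ Suc k) f n \<le> (Phi ^^ k) f n)"

definition bigO :: "(nat \<Rightarrow> ereal) \<Rightarrow> (nat \<Rightarrow> ereal) \<Rightarrow> bool" where
  "bigO f g \<longleftrightarrow> (\<exists>n0\<ge>1. \<exists>C::real. C \<ge> 0 \<and> (\<forall>n\<ge>n0. f n \<le> ereal C * g n))"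

definition solves_rec :: "nat \<Rightarrow> nat \<Rightarrow> real \<Rightarrow> (nat \<Rightarrow> real) \<Rightarrow> (nat \<Rightarrow> ereal) \<Rightarrow> bool" where
  "solves_rec a b c h f \<longleftrightarrow> f 1 = ereal c \<and>
     (\<forall>n \<in> omega_b b. f n = ereal (real a) * f (n div b) + ereal (h n))"

end

theory Submission
  imports Defs
begin

text \<open>The recurrence only constrains the values at the powers \<open>b\<^sup>k\<close>, where it becomes the linear
  recursion \<open>r 0 = c\<close>, \<open>r (k+1) = a r k + h (b\<^sup>k\<^sup>+\<^sup>1)\<close>; every function in \<open>RT_bc b c\<close> is \<open>\<infinity>\<close>
  elsewhere, which gives existence and uniqueness. Unfolding \<open>\<Phi>\<^sub>T\<close> \<open>k\<close> times from any \<open>g\<close> with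
  \<open>g 1 = c\<close> already produces the exact value \<open>r k\<close> at \<open>b\<^sup>k\<close>, and if \<open>\<Phi>\<^sub>T\<close> improves \<open>g\<close> these
  iterates stay below \<open>g\<close>. Hence the solution is pointwise below \<open>g\<close>, so it is in \<open>O(g)\<close>
  with constant 1.\<close>

fun rec_at_power :: "nat \<Rightarrow> nat \<Rightarrow> real \<Rightarrow> (nat \<Rightarrow> real) \<Rightarrow> nat \<Rightarrow> real" where
  "rec_at_power a b c h 0 = c"
| "rec_at_power a b c h (Suc k) = real a * rec_at_power a b c h k + h (b ^ Suc k)"

definition rec_solution :: "nat \<Rightarrow> nat \<Rightarrow> real \<Rightarrow> (nat \<Rightarrow> real) \<Rightarrow> nat \<Rightarrow> ereal" where
  "rec_solution a b c h n =
     (if \<exists>k. n = b ^ k then ereal (rec_at_power a b c h (THE k. n = b ^ k)) else \<infinity>)"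

lemma rec_at_power_pos:
  assumes "c > 0" and "\<forall>n\<ge>1. 0 < h n" and "b > 0"
  shows "rec_at_power a b c h k > 0"
  using assms by (induction k) (simp_all add: add_nonneg_pos)

lemma rec_solution_power:
  assumes "b > 1"
  shows "rec_solution a b c h (b ^ k) = ereal (rec_at_power a b c h k)"
proof -
  have "(THE j. b ^ k = b ^ j) = k"
    using assms by (intro the_equality) (auto simp: power_inject_exp)
  then show ?thesis unfolding rec_solution_def by auto
qed

lemma rec_solution_non_power: "\<nexists>k. n = b ^ k \<Longrightarrow> rec_solution a b c h n = \<infinity>"
  unfolding rec_solution_def by simp

lemma omega_b_iff: "n \<in> omega_b b \<longleftrightarrow> (\<exists>k. n = b ^ Suc k)"
proof
  assume "n \<in> omega_b b"
  then obtain k where "n = b ^ k" and "k \<ge> 1" unfolding omega_b_def by blast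
  then have "n = b ^ Suc (k - 1)" by simp
  then show "\<exists>k. n = b ^ Suc k" ..
next
  assume "\<exists>k. n = b ^ Suc k"
  then show "n \<in> omega_b b" unfolding omega_b_def by fastforce
qed

lemma RT_bc_non_power:
  assumes "f \<in> RT_bc b c" and "n \<ge> 1" and "\<nexists>k. n = b ^ k"
  shows "f n = \<infinity>"
proof -
  have "n \<noteq> 1" using assms(3) by (metis power_0)
  moreover have "n \<notin> omega_b b" using assms(3) omega_b_iff by blast
  ultimately show ?thesis using assms(1,2) by (simp add: RT_bc_def)
qed

lemma solves_rec_power:
  assumes "solves_rec a b c h f" and "b > 0"
  shows "f (b ^ k) = ereal (rec_at_power a b c h k)"
proof (induction k)
  case 0
  then show ?case using assms(1) by (simp add: solves_rec_def)
next
  case (Suc k)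
  have "b ^ Suc k \<in> omega_b b" using omega_b_iff by blast
  then show ?case using assms Suc by (simp add: solves_rec_def)
qed

lemma rec_solution_in_RT_bc:
  assumes "b > 1" and "c > 0" and "\<forall>n\<ge>1. 0 < h n"
  shows "rec_solution a b c h \<in> RT_bc b c"
  unfolding RT_bc_def RT_def
proof (intro CollectI conjI allI impI)
  fix n :: nat
  show "0 < rec_solution a b c h n"
    using rec_at_power_pos[OF assms(2,3)] assms(1)
    by (cases "\<exists>k. n = b ^ k") (auto simp: rec_solution_power rec_solution_non_power)
  show "rec_solution a b c h 1 = ereal c"
    using rec_solution_power[OF assms(1), of a c h 0] by simp
  assume "1 < n \<and> n \<notin> omega_b b"
  then have "\<nexists>k. n = b ^ k" by (metis omega_b_iff not0_implies_Suc less_irrefl power_0)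
  then show "rec_solution a b c h n = \<infinity>" by (rule rec_solution_non_power)
qed

lemma rec_solution_solves_rec:
  assumes "b > 1"
  shows "solves_rec a b c h (rec_solution a b c h)"
  unfolding solves_rec_def
proof (intro conjI ballI)
  show "rec_solution a b c h 1 = ereal c"
    using rec_solution_power[OF assms, of a c h 0] by simp
  fix n assume "n \<in> omega_b b"
  then obtain k where k: "n = b ^ Suc k" using omega_b_iff by blast
  have "rec_solution a b c h n = ereal (rec_at_power a b c h (Suc k))"
    unfolding k using assms by (rule rec_solution_power)
  moreover have "n div b = b ^ k"
    using k assms by simp
  then have "rec_solution a b c h (n div b) = ereal (rec_at_power a b c h k)"
    using assms by (simp add: rec_solution_power)
  ultimately show "rec_solution a b c h n
      = ereal (real a) * rec_solution a b c h (n div b) + ereal (h n)"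
    using k by simp
qed

lemma RT_bc_solves_rec_eq_rec_solution:
  assumes "f \<in> RT_bc b c" and "solves_rec a b c h f" and "b > 1" and "n \<ge> 1"
  shows "f n = rec_solution a b c h n"
proof (cases "\<exists>k. n = b ^ k")
  case True
  then show ?thesis
    using assms(2,3) by (auto simp: solves_rec_power rec_solution_power)
next
  case False
  then show ?thesis
    using assms(1,4) by (simp add: RT_bc_non_power rec_solution_non_power)
qed

lemma funpow_PhiT_power:
  assumes "b > 1" and "g 1 = ereal c" and "k \<le> m"
  shows "(PhiT a b c h ^^ m) g (b ^ k) = ereal (rec_at_power a b c h k)"
  using assms(3)
proof (induction m arbitrary: k)
  case 0
  then show ?case using assms(2) by simp
next
  case (Suc m)
  show ?case
  proof (cases k)
    case 0
    then show ?thesis by (simp add: PhiT_def)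
  next
    case k: (Suc j)
    have IH: "(PhiT a b c h ^^ m) g (b ^ j) = ereal (rec_at_power a b c h j)"
      using Suc k by simp
    have "b ^ Suc j \<noteq> 1" and "b ^ Suc j \<in> omega_b b" and "b ^ Suc j div b = b ^ j"
      using assms(1) omega_b_iff by auto
    then have "(PhiT a b c h ^^ Suc m) g (b ^ Suc j)
        = ereal (real a) * (PhiT a b c h ^^ m) g (b ^ j) + ereal (h (b ^ Suc j))"
      by (simp add: PhiT_def del: power_Suc)
    then show ?thesis
      using IH k by simp
  qed
qed

lemma improver_funpow_le:
  assumes "improver C \<Phi> g" and "n \<ge> 1"
  shows "(\<Phi> ^^ m) g n \<le> g n"
proof (induction m)
  case 0
  then show ?case by simp
next
  case (Suc m)
  have "(\<Phi> ^^ Suc m) g n \<le> (\<Phi> ^^ m) g n"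
    using assms by (simp add: improver_def del: funpow.simps)
  then show ?case using Suc order_trans by blast
qed

lemma rec_solution_le_improver:
  assumes "g \<in> RT_bc b c" and "improver (RT_bc b c) (PhiT a b c h) g"
    and "b > 1" and "n \<ge> 1"
  shows "rec_solution a b c h n \<le> g n"
proof (cases "\<exists>k. n = b ^ k")
  case True
  then obtain k where k: "n = b ^ k" by blast
  have "g 1 = ereal c" using assms(1) by (simp add: RT_bc_def)
  then have "(PhiT a b c h ^^ k) g n = rec_solution a b c h n"
    using k assms(3) by (simp add: funpow_PhiT_power rec_solution_power)
  then show ?thesis using improver_funpow_le[OF assms(2,4)] by metis
next
  case False
  then show ?thesis using assms(1,4) by (simp add: RT_bc_non_power)
qed

lemma bigO_if_le: "(\<And>n. n \<ge> 1 \<Longrightarrow> f n \<le> g n) \<Longrightarrow> bigO f g"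
  unfolding bigO_def by (rule exI[of _ 1], simp, rule exI[of _ 1], simp add: one_ereal_def[symmetric])

theorem corollary9:
  fixes a b :: nat and c :: real and h :: "nat \<Rightarrow> real"
  assumes "a > 1" and "b > 1" and "c > 0" and "\<forall>n\<ge>1. 0 < h n"
  shows "\<exists>fT \<in> RT_bc b c. solves_rec a b c h fT
           \<and> (\<forall>f \<in> RT_bc b c. solves_rec a b c h f \<longrightarrow> (\<forall>n\<ge>1. f n = fT n))
           \<and> (\<forall>g \<in> RT_bc b c. improver (RT_bc b c) (PhiT a b c h) g \<longrightarrow> bigO fT g)"
proof (intro bexI conjI ballI impI allI)
  show "rec_solution a b c h \<in> RT_bc b c"
    using assms(2-4) by (rule rec_solution_in_RT_bc)
  show "solves_rec a b c h (rec_solution a b c h)"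
    using assms(2) by (rule rec_solution_solves_rec)
  show "f n = rec_solution a b c h n"
    if "f \<in> RT_bc b c" "solves_rec a b c h f" "n \<ge> 1" for f n
    using that assms(2) by (simp add: RT_bc_solves_rec_eq_rec_solution)
  show "bigO (rec_solution a b c h) g"
    if "g \<in> RT_bc b c" "improver (RT_bc b c) (PhiT a b c h) g" for g
    using that assms(2) by (blast intro: bigO_if_le rec_solution_le_improver)
qed

end
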